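(* Consider a D2D caching network with $K$ users each of cache size $M$ files, a library of $N$ files, no selfish users, and $\frac{MK}{N}>1$, using the random caching scheme described in the context. Then every request vector $(\mathsf{r}_1,\dots,\mathsf{r}_K)$ is recoverable by the users if all library files are encoded with an MDS code of rate $r$, where $r\in(0,1)$ is a real positive root of the polynomial $$f(r)=\sum_{i=0}^{K-1}\binom{K}{i}\Big(-\frac{M}{N}\Big)^{K-i}r^{K-i-1}+1 .$$
   Context: Random caching scheme: each of the $N$ library files of $B$ bits is divided into $I$ subfiles of $B/I$ bits, each regarded as a symbol of $\mathbb{F}_{2^{B/I}}$, and each file is encoded with an $(I, I/r)$ MDS code over $\mathbb{F}_{2^{B/I}}$ (codeword length $I/r$; any $I$ encoded symbols recover the file). Each user independently, for each file, selects uniformly at random $MI/N$ of the $I/r$ encoded-symbol indices and caches those symbols, so a given encoded symbol is cached by a given user with probability $Mr/N$. At the end of the delivery phase each user knows every encoded symbol of its requested file that is cached by at least one user; the number of encoded symbols of a file cached exclusively by a given set $\mathcal{P}$ of users is taken to be its typical value $(\frac{Mr}{N})^{|\mathcal{P}|}(1-\frac{Mr}{N})^{K-|\mathcal{P}|}\frac{I}{r}$ (law of large numbers, large $I$). A file is recoverable by a user if the user knows at least $I$ of its encoded symbols. *)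

theory Defs
  imports Complex_Main
begin

text \<open>Users are indexed by 0..K-1, files by 0..N-1. An encoded symbol is cached
by a given user with probability q = M r / N.\<close>

definition cache_prob :: "real \<Rightarrow> nat \<Rightarrow> real \<Rightarrow> real" where
  "cache_prob M N r = M * r / real N"

text \<open>Typical (law-of-large-numbers) number of encoded symbols of a file that are
cached exclusively by the set P of users: q^|P| (1-q)^(K-|P|) I / r.\<close>
definition exclusive_count :: "nat \<Rightarrow> real \<Rightarrow> nat \<Rightarrow> nat \<Rightarrow> real \<Rightarrow> nat set \<Rightarrow> real" where
  "exclusive_count K M N I r P =
     (cache_prob M N r) ^ card P * (1 - cache_prob M N r) ^ (K - card P) * real I / r"

text \<open>Number of encoded symbols of file n known to user k at the end of delivery:
all encoded symbols of n cached by at least one user, i.e. the sum over all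
nonempty user sets P of the symbols cached exclusively by P.\<close>
definition known_symbols ::
  "nat \<Rightarrow> real \<Rightarrow> nat \<Rightarrow> nat \<Rightarrow> real \<Rightarrow> nat \<Rightarrow> nat \<Rightarrow> real" where
  "known_symbols K M N I r k n =
     (\<Sum>P\<in>{P. P \<subseteq> {..<K} \<and> P \<noteq> {}}. exclusive_count K M N I r P)"

definition file_recoverable ::
  "nat \<Rightarrow> real \<Rightarrow> nat \<Rightarrow> nat \<Rightarrow> real \<Rightarrow> nat \<Rightarrow> nat \<Rightarrow> bool" where
  "file_recoverable K M N I r k n \<longleftrightarrow> known_symbols K M N I r k n \<ge> real I"

definition request_recoverable ::
  "nat \<Rightarrow> real \<Rightarrow> nat \<Rightarrow> nat \<Rightarrow> real \<Rightarrow> (nat \<Rightarrow> nat) \<Rightarrow> bool" where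
  "request_recoverable K M N I r req \<longleftrightarrow>
     (\<forall>k<K. file_recoverable K M N I r k (req k))"

definition rate_poly :: "nat \<Rightarrow> real \<Rightarrow> nat \<Rightarrow> real \<Rightarrow> real" where
  "rate_poly K M N r =
     (\<Sum>i=0..K-1. real (K choose i) * (- M / real N) ^ (K - i) * r ^ (K - i - 1)) + 1"

end

theory Submission
  imports Defs
begin

text \<open>With q = M r / N, the identity r f(r) = (1 - q)^K - 1 + r shows that r is a root of f
  exactly when 1 - (1 - q)^K = r, i.e. when the typical fraction of encoded symbols cached by
  at least one user equals the code rate. Every user then knows r \<cdot> I/r = I encoded symbols of
  every file, enough for MDS decoding. The hypotheses M K / N > 1 and r < 1 only guarantee that
  such a root exists.\<close>

lemma sum_nonempty_subsets_binomial_weights: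
  fixes q :: "'a :: comm_ring_1"
  assumes "finite A"
  shows "(\<Sum>P\<in>{P. P \<subseteq> A \<and> P \<noteq> {}}. q ^ card P * (1 - q) ^ (card A - card P))
     = 1 - (1 - q) ^ card A"
proof -
  have "1 = (\<Prod>x\<in>A. q + (1 - q))"
    by simp
  also have "\<dots> = (\<Sum>P\<in>Pow A. (\<Prod>x\<in>P. q) * (\<Prod>x\<in>A - P. 1 - q))"
    by (rule prod_add) (rule assms)
  also have "\<dots> = (\<Sum>P\<in>Pow A. q ^ card P * (1 - q) ^ (card A - card P))"
    using assms by (intro sum.cong) (auto simp: card_Diff_subset finite_subset)
  finally have all: "(\<Sum>P\<in>Pow A. q ^ card P * (1 - q) ^ (card A - card P)) = 1" ..
  have "{P. P \<subseteq> A \<and> P \<noteq> {}} = Pow A - {{}}"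
    by auto
  then show ?thesis
    using sum_diff1[of "Pow A" "\<lambda>P. q ^ card P * (1 - q) ^ (card A - card P)" "{}"] all assms
    by simp
qed

lemma rate_poly_times_rate:
  assumes "K \<ge> 1"
  shows "r * rate_poly K M N r = (1 - cache_prob M N r) ^ K - 1 + r"
proof -
  define b where "b = - cache_prob M N r"
  have term_eq: "r * (real (K choose i) * (- M / real N) ^ (K - i) * r ^ (K - i - 1))
      = real (K choose i) * b ^ (K - i)" if "i \<le> K - 1" for i
  proof -
    from that assms have "K - i = Suc (K - i - 1)"
      by linarith
    then have "r * r ^ (K - i - 1) = r ^ (K - i)"
      by (metis power_Suc)
    moreover have "b ^ (K - i) = (- M / real N) ^ (K - i) * r ^ (K - i)"
      unfolding b_def cache_prob_def by (simp add: power_mult_distrib[symmetric])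
    ultimately show ?thesis
      by (simp add: ac_simps)
  qed
  have "(1 + b) ^ K = (\<Sum>i=0..K. real (K choose i) * b ^ (K - i))"
    using binomial_ring[of 1 b K] by (simp add: atLeast0AtMost)
  also have "\<dots> = (\<Sum>i=0..K-1. real (K choose i) * b ^ (K - i)) + 1"
    using assms sum.atLeast0_atMost_Suc[of "\<lambda>i. real (K choose i) * b ^ (K - i)" "K - 1"]
    by simp
  finally have binomial: "(\<Sum>i=0..K-1. real (K choose i) * b ^ (K - i)) = (1 + b) ^ K - 1"
    by simp
  have "r * rate_poly K M N r
      = (\<Sum>i=0..K-1. r * (real (K choose i) * (- M / real N) ^ (K - i) * r ^ (K - i - 1))) + r"
    unfolding rate_poly_def by (simp add: sum_distrib_left algebra_simps)
  also have "\<dots> = (\<Sum>i=0..K-1. real (K choose i) * b ^ (K - i)) + r"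
    using term_eq by (intro arg_cong2[where f = "(+)"] sum.cong) auto
  also have "\<dots> = (1 + b) ^ K - 1 + r"
    by (simp only: binomial)
  finally show ?thesis
    unfolding b_def by simp
qed

lemma known_symbols_eq:
  "known_symbols K M N I r k n = (1 - (1 - cache_prob M N r) ^ K) * real I / r"
proof -
  have "known_symbols K M N I r k n
      = (\<Sum>P\<in>{P. P \<subseteq> {..<K} \<and> P \<noteq> {}}.
           cache_prob M N r ^ card P * (1 - cache_prob M N r) ^ (card {..<K} - card P)) * (real I / r)"
    unfolding known_symbols_def exclusive_count_def sum_distrib_right by simp
  then show ?thesis
    using sum_nonempty_subsets_binomial_weights[of "{..<K}" "cache_prob M N r"] by simp
qed

theorem theorem2:
  fixes K N I :: nat and M r :: real
  assumes "K \<ge> 1" and "N \<ge> 1" and "M > 0" and "I > 0"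
    and "M * real K / real N > 1"
    and "0 < r" and "r < 1" and "rate_poly K M N r = 0"
  shows "\<forall>req. (\<forall>k<K. req k < N) \<longrightarrow> request_recoverable K M N I r req"
proof -
  have cached_fraction: "1 - (1 - cache_prob M N r) ^ K = r"
    using rate_poly_times_rate[OF assms(1), of r M N] assms(8) by simp
  have "known_symbols K M N I r k n = real I" for k n
    using assms(6) by (simp add: known_symbols_eq cached_fraction)
  then show ?thesis
    unfolding request_recoverable_def file_recoverable_def by simp
qed

end
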